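(* Let $n\ge2$, $c>0$, and $d\mu=e^{c|x|^2}dx$ on $\mathbb R^n$, with $\|g\|_2^2=\int_{\mathbb R^n}|g|^2\,d\mu$. Then $$\inf\Big\{\frac{\|\nabla u\|_2^2}{\|u\|_2^2}: u\in C_0^\infty(\mathbb R^n),\ u\ne0\Big\}=2cn=\frac{\|\nabla(e^{-c|x|^2})\|_2^2}{\|e^{-c|x|^2}\|_2^2}.$$ *)

theory Defs
  imports "HOL-Analysis.Analysis"
begin

fun Ck :: "nat \<Rightarrow> ('a::euclidean_space \<Rightarrow> real) \<Rightarrow> bool" where
  "Ck 0 f = continuous_on UNIV f"
| "Ck (Suc k) f = (f differentiable_on UNIV \<and>
      (\<forall>v. Ck k (\<lambda>x. frechet_derivative f (at x) v)))"

definition C_inf :: "('a::euclidean_space \<Rightarrow> real) \<Rightarrow> bool" where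
  "C_inf f = (\<forall>k. Ck k f)"

definition C0_inf :: "('a::euclidean_space \<Rightarrow> real) \<Rightarrow> bool" where
  "C0_inf f = (C_inf f \<and> compact (closure {x. f x \<noteq> 0}))"

definition grad :: "('a::euclidean_space \<Rightarrow> real) \<Rightarrow> 'a \<Rightarrow> 'a" where
  "grad u x = (\<Sum>i\<in>Basis. frechet_derivative u (at x) i *\<^sub>R i)"

definition gmu :: "real \<Rightarrow> 'a::euclidean_space measure" where
  "gmu c = density lborel (\<lambda>x. ennreal (exp (c * norm x ^ 2)))"

definition L2sq :: "real \<Rightarrow> ('a::euclidean_space \<Rightarrow> 'b::real_normed_vector) \<Rightarrow> real" where
  "L2sq c g = integral\<^sup>L (gmu c) (\<lambda>x. norm (g x) ^ 2)"

end

theory Submission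
  imports Defs "HOL-Probability.Probability" "HOL-Computational_Algebra.Polynomial"
begin

text \<open>For compactly supported smooth \<open>u\<close> and \<open>w = e\<^sup>c\<^sup>|\<^sup>x\<^sup>|\<^sup>2\<close>, expanding the square gives
  \<open>|\<nabla>u + 2c u x|\<^sup>2 w = |\<nabla>u|\<^sup>2 w + 2c x \<bullet> \<nabla>(u\<^sup>2 w)\<close>. By scaling, the radial derivative
  \<open>x \<bullet> \<nabla>h\<close> of any \<open>h\<close> integrates to \<open>-n \<integral> h\<close>, so
  \<open>\<parallel>\<nabla>u\<parallel>\<^sup>2 = 2cn \<parallel>u\<parallel>\<^sup>2 + \<integral> |\<nabla>u + 2c u x|\<^sup>2 w \<ge> 2cn \<parallel>u\<parallel>\<^sup>2\<close>. The Gaussian \<open>e\<^sup>-\<^sup>c\<^sup>|\<^sup>x\<^sup>|\<^sup>2\<close>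
  solves \<open>\<nabla>u + 2c u x = 0\<close> and attains \<open>2cn\<close>; cutting it off smoothly at \<open>|x|\<^sup>2 = 2/a\<close>
  changes the quotient by \<open>O(a)\<close>, so \<open>2cn\<close> is also the infimum over \<open>C\<^sub>0\<^sup>\<infinity>\<close>.\<close>

section \<open>Smooth functions\<close>

lemma Ck_SucI:
  assumes "\<And>x. (f has_derivative D x) (at x)" "\<And>v. Ck k (\<lambda>x. D x v)"
  shows "Ck (Suc k) f"
proof -
  have "f differentiable_on UNIV"
    using assms(1) unfolding differentiable_on_def differentiable_def by blast
  moreover have "(\<lambda>x. frechet_derivative f (at x) v) = (\<lambda>x. D x v)" for v
    using frechet_derivative_at[OF assms(1)] by auto
  ultimately show ?thesis using assms(2) by simp
qed

lemma Ck_SucD: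
  assumes "Ck (Suc k) f"
  shows "(f has_derivative frechet_derivative f (at x)) (at x)"
    and "Ck k (\<lambda>x. frechet_derivative f (at x) v)"
  using assms by (simp_all add: differentiable_on_def frechet_derivative_works)

lemma Ck_Suc_imp_Ck: "Ck (Suc k) f \<Longrightarrow> Ck k f"
  by (induction k arbitrary: f) (simp_all add: differentiable_imp_continuous_on)

lemma Ck_const: "Ck k (\<lambda>x. b)"
proof (induction k arbitrary: b)
  case (Suc k)
  show ?case by (rule Ck_SucI[where D="\<lambda>x v. 0"]) (auto intro: Suc)
qed simp

lemma Ck_add: "Ck k f \<Longrightarrow> Ck k g \<Longrightarrow> Ck k (\<lambda>x. f x + g x)"
proof (induction k arbitrary: f g)
  case (Suc k)
  show ?case
    by (rule Ck_SucI[OF has_derivative_add[OF Ck_SucD(1)[OF Suc.prems(1)] Ck_SucD(1)[OF Suc.prems(2)]]])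
      (rule Suc.IH[OF Ck_SucD(2)[OF Suc.prems(1)] Ck_SucD(2)[OF Suc.prems(2)]])
qed (simp add: continuous_on_add)

lemma Ck_mult: "Ck k f \<Longrightarrow> Ck k g \<Longrightarrow> Ck k (\<lambda>x. f x * g x)"
proof (induction k arbitrary: f g)
  case (Suc k)
  show ?case
  proof (rule Ck_SucI[OF has_derivative_mult[OF Ck_SucD(1)[OF Suc.prems(1)] Ck_SucD(1)[OF Suc.prems(2)]]])
    fix v :: 'a
    show "Ck k (\<lambda>x. f x * frechet_derivative g (at x) v + frechet_derivative f (at x) v * g x)"
      using Suc.prems by (intro Ck_add Suc.IH Ck_SucD(2) Ck_Suc_imp_Ck[of k])
  qed
qed (simp add: continuous_on_mult)

lemma Ck_inner_left: "Ck k (\<lambda>x. x \<bullet> a)"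
proof (cases k)
  case (Suc m)
  show ?thesis unfolding Suc
    by (rule Ck_SucI[where D="\<lambda>x v. v \<bullet> a"]) (auto intro!: derivative_eq_intros Ck_const)
qed (simp add: continuous_on_inner)

lemma has_derivative_norm_power2:
  "((\<lambda>x. norm x ^ 2) has_derivative (\<lambda>v. 2 * (x \<bullet> v))) (at x)"
proof -
  have "((\<lambda>x. x \<bullet> x) has_derivative (\<lambda>v. x \<bullet> v + v \<bullet> x)) (at x)"
    by (rule has_derivative_inner[OF has_derivative_ident has_derivative_ident])
  then show ?thesis by (simp add: power2_norm_eq_inner inner_commute)
qed

lemma Ck_norm_power2: "Ck k (\<lambda>x. norm x ^ 2)"
proof (cases k)
  case (Suc m)
  have "Ck m (\<lambda>x. 2 * (x \<bullet> v))" for v :: 'a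
    by (rule Ck_mult[OF Ck_const Ck_inner_left])
  then show ?thesis unfolding Suc by (intro Ck_SucI[OF has_derivative_norm_power2])
qed (simp add: continuous_on_norm continuous_on_power)

definition deriv_tower :: "(nat \<Rightarrow> real \<Rightarrow> real) \<Rightarrow> bool" where
  "deriv_tower H \<longleftrightarrow> (\<forall>j t. (H j has_real_derivative H (Suc j) t) (at t))"

lemma deriv_tower_continuous_on: "deriv_tower H \<Longrightarrow> continuous_on A (H j)"
  unfolding deriv_tower_def by (meson DERIV_isCont continuous_at_imp_continuous_on)

lemma deriv_tower_affine:
  assumes "deriv_tower H"
  shows "deriv_tower (\<lambda>j t. a ^ j * H j (a * t + b))"
  unfolding deriv_tower_def
proof (intro allI)
  fix j t
  have "((\<lambda>t. H j (a * t + b)) has_real_derivative H (Suc j) (a * t + b) * a) (at t)"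
    using assms unfolding deriv_tower_def
    by (intro DERIV_chain2[where f="H j"]) (auto intro!: derivative_eq_intros)
  then show "((\<lambda>t. a ^ j * H j (a * t + b)) has_real_derivative a ^ Suc j * H (Suc j) (a * t + b)) (at t)"
    by (auto intro!: derivative_eq_intros simp: algebra_simps)
qed

lemma deriv_tower_exp: "deriv_tower (\<lambda>j. exp)"
  by (simp add: deriv_tower_def)

lemma Ck_compose:
  assumes "deriv_tower H" "Ck k f"
  shows "Ck k (\<lambda>x. H 0 (f x))"
  using assms
proof (induction k arbitrary: H f)
  case 0
  then show ?case
    by (auto intro: continuous_on_compose2[OF deriv_tower_continuous_on[OF 0(1)]])
next
  case (Suc k)
  have "deriv_tower (\<lambda>j. H (Suc j))"
    using Suc.prems(1) by (simp add: deriv_tower_def)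
  then have "Ck k (\<lambda>x. H 1 (f x))"
    using Suc.IH Ck_Suc_imp_Ck[OF Suc.prems(2)] by simp
  moreover have "((\<lambda>x. H 0 (f x)) has_derivative (\<lambda>v. frechet_derivative f (at x) v * H 1 (f x))) (at x)" for x
    using Suc.prems unfolding deriv_tower_def
    by (intro DERIV_compose_FDERIV[where f="H 0"] Ck_SucD(1)) auto
  ultimately show ?case
    by (intro Ck_SucI[where D="\<lambda>x v. frechet_derivative f (at x) v * H 1 (f x)"] Ck_mult)
      (use Ck_SucD(2)[OF Suc.prems(2)] in auto)
qed

section \<open>A flat function\<close>

text \<open>\<open>bump_deriv j\<close> is the \<open>j\<close>-th derivative of the flat function \<open>t \<mapsto> exp (-1/t)\<close> (\<open>t > 0\<close>),
  \<open>0\<close> (\<open>t \<le> 0\<close>): differentiating \<open>p (1/t) exp (-1/t)\<close> gives \<open>q (1/t) exp (-1/t)\<close> with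
  \<open>q = X\<^sup>2 (p - p')\<close>.\<close>
fun bump_deriv_poly :: "nat \<Rightarrow> real poly" where
  "bump_deriv_poly 0 = 1"
| "bump_deriv_poly (Suc j) = [:0, 0, 1:] * (bump_deriv_poly j - pderiv (bump_deriv_poly j))"

definition bump_deriv :: "nat \<Rightarrow> real \<Rightarrow> real" where
  "bump_deriv j t = (if t > 0 then poly (bump_deriv_poly j) (inverse t) * exp (- inverse t) else 0)"

lemma tendsto_poly_times_exp_neg_at_top:
  fixes q :: "real poly"
  shows "((\<lambda>z. poly q z * exp (- z)) \<longlongrightarrow> 0) at_top"
proof -
  have "((\<lambda>z. \<Sum>i\<le>degree q. coeff q i * (z ^ i / exp z)) \<longlongrightarrow> (\<Sum>i\<le>degree q. coeff q i * 0)) at_top"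
    by (intro tendsto_sum tendsto_mult tendsto_const tendsto_power_div_exp_0)
  then show ?thesis
    by (simp add: poly_altdef sum_distrib_right exp_minus divide_inverse mult.assoc)
qed

lemma tendsto_poly_inverse_times_exp_at_right_0:
  fixes q :: "real poly"
  shows "((\<lambda>y. poly q (inverse y) * exp (- inverse y)) \<longlongrightarrow> 0) (at_right 0)"
  using filterlim_compose[OF tendsto_poly_times_exp_neg_at_top filterlim_inverse_at_top_right] by simp

lemma bump_deriv_has_derivative_pos:
  assumes t: "t > 0"
  shows "(bump_deriv j has_real_derivative bump_deriv (Suc j) t) (at t)"
proof -
  let ?p = "bump_deriv_poly j"
  have "((\<lambda>t. poly ?p (inverse t) * exp (- inverse t)) has_real_derivative
      poly (pderiv ?p) (inverse t) * (- inverse (t\<^sup>2)) * exp (- inverse t)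
      + poly ?p (inverse t) * (exp (- inverse t) * inverse (t\<^sup>2))) (at t)"
    using t by (auto intro!: derivative_eq_intros DERIV_chain2[OF poly_DERIV] simp: power2_eq_square)
  also have "poly (pderiv ?p) (inverse t) * (- inverse (t\<^sup>2)) * exp (- inverse t)
      + poly ?p (inverse t) * (exp (- inverse t) * inverse (t\<^sup>2)) = bump_deriv (Suc j) t"
    using t by (simp add: bump_deriv_def algebra_simps power2_eq_square)
  finally show ?thesis
    by (rule has_field_derivative_transform_within_open[of _ _ _ "{0<..}"]) (use t in \<open>auto simp: bump_deriv_def\<close>)
qed

lemma bump_deriv_has_derivative_neg:
  assumes t: "t < 0"
  shows "(bump_deriv j has_real_derivative bump_deriv (Suc j) t) (at t)"
proof -
  have "((\<lambda>t. 0) has_real_derivative bump_deriv (Suc j) t) (at t)"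
    using t by (simp add: bump_deriv_def)
  then show ?thesis
    by (rule has_field_derivative_transform_within_open[of _ _ _ "{..<0}"]) (use t in \<open>auto simp: bump_deriv_def\<close>)
qed

lemma bump_deriv_has_derivative_0:
  "(bump_deriv j has_real_derivative bump_deriv (Suc j) 0) (at 0)"
proof -
  have left: "((\<lambda>y. bump_deriv j y / y) \<longlongrightarrow> 0) (at_left 0)"
    by (rule tendsto_eventually) (auto simp: eventually_at_left_field bump_deriv_def intro!: exI[of _ "-1"])
  have "\<forall>\<^sub>F y in at_right 0. poly (pCons 0 (bump_deriv_poly j)) (inverse y) * exp (- inverse y) = bump_deriv j y / y"
    by (auto simp: eventually_at_right_field bump_deriv_def field_simps intro!: exI[of _ 1])
  then have right: "((\<lambda>y. bump_deriv j y / y) \<longlongrightarrow> 0) (at_right 0)"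
    using tendsto_poly_inverse_times_exp_at_right_0 tendsto_cong by fastforce
  have lim: "((\<lambda>y. bump_deriv j y / y) \<longlongrightarrow> 0) (at 0)"
    using left right by (simp only: filterlim_at_split)
  have zero: "bump_deriv j 0 = 0" "bump_deriv (Suc j) 0 = 0"
    by (simp_all add: bump_deriv_def)
  show ?thesis
    unfolding has_field_derivative_iff zero using lim by simp
qed

lemma deriv_tower_bump_deriv: "deriv_tower bump_deriv"
  unfolding deriv_tower_def
proof (intro allI)
  fix j t
  show "(bump_deriv j has_real_derivative bump_deriv (Suc j) t) (at t)"
    by (cases t "0::real" rule: linorder_cases)
      (auto intro: bump_deriv_has_derivative_pos bump_deriv_has_derivative_neg bump_deriv_has_derivative_0)
qed

lemma bump_deriv_0: "bump_deriv 0 t = (if t > 0 then exp (- inverse t) else 0)"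
  by (simp add: bump_deriv_def)

lemma bump_deriv_0_nonneg: "bump_deriv 0 t \<ge> 0"
  by (simp add: bump_deriv_0)

lemma bump_deriv_0_pos: "t > 0 \<Longrightarrow> bump_deriv 0 t > 0"
  by (simp add: bump_deriv_0)

lemma bump_deriv_0_mono: "s \<le> t \<Longrightarrow> bump_deriv 0 s \<le> bump_deriv 0 t"
  by (auto simp: bump_deriv_0 intro!: le_imp_inverse_le)

lemma power2_times_exp_neg_le: "y \<ge> 0 \<Longrightarrow> y\<^sup>2 * exp (- y) \<le> (4::real)"
proof -
  assume y: "y \<ge> 0"
  have "y / 2 \<le> exp (y / 2)" using exp_ge_add_one_self[of "y / 2"] by linarith
  then have "(y / 2)\<^sup>2 \<le> exp (y / 2) ^ 2" using y by (intro power_mono) auto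
  also have "exp (y / 2) ^ 2 = exp y" by (simp add: power2_eq_square exp_add[symmetric])
  finally show ?thesis by (simp add: exp_minus field_simps)
qed

lemma abs_bump_deriv_1_le: "\<bar>bump_deriv 1 t\<bar> \<le> 4"
  using power2_times_exp_neg_le[of "inverse t"] by (simp add: bump_deriv_def power2_eq_square)

section \<open>Integrals over Euclidean space\<close>

lemma L2sq_eq_integral_lborel:
  fixes f :: "'a::euclidean_space \<Rightarrow> 'b::real_normed_vector"
  assumes "continuous_on UNIV f"
  shows "L2sq c f = integral\<^sup>L lborel (\<lambda>x. exp (c * norm x ^ 2) * norm (f x) ^ 2)"
proof -
  have "continuous_on UNIV (\<lambda>x. norm (f x) ^ 2)"
    by (intro continuous_intros assms)
  then have "(\<lambda>x. norm (f x) ^ 2) \<in> borel_measurable lborel"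
    by (simp add: borel_measurable_continuous_onI)
  then show ?thesis
    unfolding L2sq_def gmu_def by (simp add: integral_density)
qed

lemma integrable_continuous_bounded_support:
  fixes f :: "'a::euclidean_space \<Rightarrow> real"
  assumes "continuous_on UNIV f" "\<And>x. r < norm x \<Longrightarrow> f x = 0"
  shows "integrable lborel f"
proof -
  have "integrable lborel (\<lambda>x. indicator (cball 0 r) x *\<^sub>R f x)"
    by (rule borel_integrable_compact[OF compact_cball continuous_on_subset[OF assms(1)]]) auto
  moreover have "(\<lambda>x. indicator (cball 0 r) x *\<^sub>R f x) = f"
    using assms(2) by (auto simp: indicator_def fun_eq_iff not_le)
  ultimately show ?thesis by simp
qed

lemma integral_lborel_pos:
  fixes f :: "'a::euclidean_space \<Rightarrow> real"
  assumes cont: "continuous_on UNIV f" and nonneg: "\<And>x. f x \<ge> 0" and int: "integrable lborel f"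
    and pos: "f a > 0"
  shows "integral\<^sup>L lborel f > 0"
proof -
  obtain d where d: "d > 0" "\<And>y. dist y a < d \<Longrightarrow> dist (f y) (f a) < f a / 2"
    using cont pos unfolding continuous_on_eq_continuous_at[OF open_UNIV] continuous_at_eps_delta
    by (metis UNIV_I half_gt_zero)
  let ?g = "\<lambda>x. f a / 2 * indicator (ball a d) x"
  have "?g x \<le> f x" for x
  proof (cases "x \<in> ball a d")
    case True
    then have "\<bar>f x - f a\<bar> < f a / 2"
      using d(2)[of x] by (simp add: dist_real_def dist_commute)
    then have "f a / 2 < f x"
      unfolding abs_less_iff by linarith
    then show ?thesis using True by simp
  qed (simp add: nonneg)
  then have "integral\<^sup>L lborel ?g \<le> integral\<^sup>L lborel f"
    using emeasure_lborel_ball_finite[of a d]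
    by (intro integral_mono int integrable_mult_right) (simp_all add: integrable_indicator_iff)
  moreover have "0 < f a / 2 * measure lborel (ball a d)"
    using pos content_ball_pos[OF d(1)] by simp
  ultimately show ?thesis
    by simp
qed

lemma L2sq_pos:
  fixes u :: "'a::euclidean_space \<Rightarrow> real"
  assumes cont: "continuous_on UNIV u" and supp: "\<And>x. r < norm x \<Longrightarrow> u x = 0"
    and nonzero: "u \<noteq> (\<lambda>x. 0)"
  shows "L2sq c u > 0"
proof -
  obtain x0 where "u x0 \<noteq> 0" using nonzero by auto
  moreover have "continuous_on UNIV (\<lambda>x. exp (c * norm x ^ 2) * norm (u x) ^ 2)"
    by (intro continuous_intros cont)
  ultimately show ?thesis
    unfolding L2sq_eq_integral_lborel[OF cont] using supp
    by (intro integral_lborel_pos[where a=x0] integrable_continuous_bounded_support[of _ r]) auto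
qed

lemma integrable_gaussian_real:
  fixes a :: real
  assumes "a > 0"
  shows "integrable lborel (\<lambda>t::real. exp (- a * t ^ 2))"
proof -
  have "integrable lborel (\<lambda>x. sqrt (2 * pi) * std_normal_density (0 + sqrt (2 * a) * x))"
    using assms by (intro integrable_mult_right lborel_integrable_real_affine integrable_normal_density) auto
  also have "(\<lambda>x. sqrt (2 * pi) * std_normal_density (0 + sqrt (2 * a) * x)) = (\<lambda>x. exp (- a * x ^ 2))"
    using assms by (simp add: normal_density_def power_mult_distrib fun_eq_iff)
  finally show ?thesis .
qed

lemma integrable_gaussian:
  fixes a :: real
  assumes a: "a > 0"
  shows "integrable lborel (\<lambda>x::'a::euclidean_space. exp (- a * norm x ^ 2))"
proof (rule integrableI_nonneg)
  have "norm x ^ 2 = (\<Sum>b\<in>Basis. (x \<bullet> b) ^ 2)" for x :: 'a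
    unfolding power2_norm_eq_inner euclidean_inner[of x x] by (simp add: power2_eq_square)
  then have "ennreal (exp (- a * norm x ^ 2)) = (\<Prod>b\<in>Basis. ennreal (exp (- a * (x \<bullet> b) ^ 2)))" for x :: 'a
    by (simp add: prod_ennreal sum_distrib_left exp_sum[symmetric])
  then have "(\<integral>\<^sup>+x. ennreal (exp (- a * norm (x::'a) ^ 2)) \<partial>lborel)
      = (\<Prod>b\<in>(Basis::'a set). \<integral>\<^sup>+t. ennreal (exp (- a * t ^ 2)) \<partial>lborel)"
    using nn_integral_lborel_prod[of "\<lambda>b t. ennreal (exp (- a * t ^ 2))"] by simp
  also have "\<dots> < \<infinity>"
    using integrable_gaussian_real[OF a] unfolding integrable_iff_bounded
    by (simp add: prod_constant power_less_top_ennreal)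
  finally show "(\<integral>\<^sup>+x. ennreal (exp (- a * norm (x::'a) ^ 2)) \<partial>lborel) < \<infinity>" .
qed simp_all

lemma times_exp_neg_le:
  fixes c t :: real
  assumes "c > 0" "t \<ge> 0"
  shows "t * exp (- c * t) \<le> 2 / c * exp (- (c / 2) * t)"
proof -
  have "t \<le> 2 / c * exp (c * t / 2)"
    using exp_ge_add_one_self[of "c * t / 2"] assms by (simp add: field_simps)
  then have "t * exp (- c * t) \<le> 2 / c * exp (c * t / 2) * exp (- c * t)"
    by (intro mult_right_mono) auto
  also have "\<dots> = 2 / c * exp (- (c / 2) * t)"
    by (simp add: mult.assoc exp_add[symmetric])
  finally show ?thesis .
qed

lemma integrable_norm_power2_times_gaussian:
  fixes c :: real
  assumes c: "c > 0"
  shows "integrable lborel (\<lambda>x::'a::euclidean_space. norm x ^ 2 * exp (- c * norm x ^ 2))"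
proof (rule Bochner_Integration.integrable_bound)
  show "integrable lborel (\<lambda>x::'a. 2 / c * exp (- (c / 2) * norm x ^ 2))"
    using c by (intro integrable_mult_right integrable_gaussian) auto
  show "AE x in lborel. norm (norm x ^ 2 * exp (- c * norm x ^ 2)) \<le> norm (2 / c * exp (- (c / 2) * norm (x::'a) ^ 2))"
    using times_exp_neg_le[OF c] c by (auto simp: abs_mult)
qed simp

lemma lborel_integral_scaleR:
  fixes h :: "'a::euclidean_space \<Rightarrow> real"
  assumes h: "integrable lborel h" and c: "c > 0"
  shows "integrable lborel (\<lambda>x. h (c *\<^sub>R x))"
    and "integral\<^sup>L lborel h = c ^ DIM('a) * integral\<^sup>L lborel (\<lambda>x. h (c *\<^sub>R x))"
proof -
  have [measurable]: "h \<in> borel_measurable borel"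
    using h by (simp add: borel_measurable_integrable)
  let ?M = "distr lborel borel (\<lambda>x::'a. 0 + c *\<^sub>R x)"
  have L: "lborel = density ?M (\<lambda>x. ennreal (\<bar>c\<bar> ^ DIM('a)))"
    using lborel_affine[of c "0::'a"] c by simp
  have "integrable (density ?M (\<lambda>x. ennreal (\<bar>c\<bar> ^ DIM('a)))) h"
    using h L by simp
  then have "integrable lborel (\<lambda>x. \<bar>c\<bar> ^ DIM('a) *\<^sub>R h (0 + c *\<^sub>R x))"
    by (simp add: integrable_density integrable_distr_eq)
  then have "integrable lborel (\<lambda>x. (1 / c ^ DIM('a)) * (c ^ DIM('a) * h (c *\<^sub>R x)))"
    using c by (intro integrable_mult_right) simp
  then show "integrable lborel (\<lambda>x. h (c *\<^sub>R x))"
    using c by simp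
  have "integral\<^sup>L lborel h = integral\<^sup>L (density ?M (\<lambda>x. ennreal (\<bar>c\<bar> ^ DIM('a)))) h"
    using L by simp
  also have "\<dots> = integral\<^sup>L lborel (\<lambda>x. \<bar>c\<bar> ^ DIM('a) *\<^sub>R h (0 + c *\<^sub>R x))"
    by (simp add: integral_density integral_distr)
  finally show "integral\<^sup>L lborel h = c ^ DIM('a) * integral\<^sup>L lborel (\<lambda>x. h (c *\<^sub>R x))"
    using c by simp
qed

section \<open>The integral of the radial derivative\<close>

lemma integral_dilation_quotient:
  fixes h :: "'a::euclidean_space \<Rightarrow> real"
  assumes h: "integrable lborel h" and s: "1 + s > 0"
  shows "integral\<^sup>L lborel (\<lambda>x. (h ((1 + s) *\<^sub>R x) - h x) / s)
    = integral\<^sup>L lborel h * ((1 / (1 + s) ^ DIM('a) - 1) / s)"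
proof -
  have "integral\<^sup>L lborel (\<lambda>x. (h ((1 + s) *\<^sub>R x) - h x) / s)
      = (integral\<^sup>L lborel (\<lambda>x. h ((1 + s) *\<^sub>R x)) - integral\<^sup>L lborel h) / s"
    using lborel_integral_scaleR(1)[OF h s] h by simp
  also have "integral\<^sup>L lborel (\<lambda>x. h ((1 + s) *\<^sub>R x)) = integral\<^sup>L lborel h / (1 + s) ^ DIM('a)"
    using lborel_integral_scaleR(2)[OF h s] s by (simp add: field_simps del: scaleR_add_left)
  finally show ?thesis
    using s by (simp add: field_simps)
qed

lemma linear_eq_sum_Basis:
  fixes L :: "'a::euclidean_space \<Rightarrow> real"
  assumes "linear L"
  shows "L x = (\<Sum>e\<in>Basis. (x \<bullet> e) * L e)"
proof -
  have "L x = L (\<Sum>e\<in>Basis. (x \<bullet> e) *\<^sub>R e)"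
    by (simp add: euclidean_representation)
  also have "\<dots> = (\<Sum>e\<in>Basis. (x \<bullet> e) * L e)"
    using assms by (simp add: linear_sum linear_scale)
  finally show ?thesis .
qed

lemma continuous_on_radial_derivative:
  fixes h :: "'a::euclidean_space \<Rightarrow> real"
  assumes hd: "\<And>x. (h has_derivative Dh x) (at x)"
    and Dc: "\<And>e. e \<in> Basis \<Longrightarrow> continuous_on UNIV (\<lambda>x. Dh x e)"
  shows "continuous_on UNIV (\<lambda>x. Dh x x)"
proof -
  have "continuous_on UNIV (\<lambda>x. \<Sum>e\<in>Basis. (x \<bullet> e) * Dh x e)"
    by (intro continuous_intros Dc) auto
  then show ?thesis
    by (simp only: linear_eq_sum_Basis[OF has_derivative_linear[OF hd], symmetric])
qed

lemma has_real_derivative_along_ray: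
  fixes h :: "'a::real_normed_vector \<Rightarrow> real"
  assumes "(h has_derivative D) (at (t *\<^sub>R x))"
  shows "((\<lambda>t. h (t *\<^sub>R x)) has_real_derivative D x) (at t)"
proof -
  have "((\<lambda>t. t *\<^sub>R x) has_derivative (\<lambda>u. u *\<^sub>R x)) (at t)"
    by (auto intro!: derivative_eq_intros)
  then have "((\<lambda>t. h (t *\<^sub>R x)) has_derivative (\<lambda>u. D (u *\<^sub>R x))) (at t)"
    using assms by (rule has_derivative_compose)
  moreover have "(\<lambda>u. D (u *\<^sub>R x)) = (*) (D x)"
    using has_derivative_linear[OF assms] by (simp add: linear_scale fun_eq_iff)
  ultimately show ?thesis
    by (simp add: has_field_derivative_def)
qed

lemma abs_diff_along_ray_le:
  fixes h :: "'a::real_normed_vector \<Rightarrow> real"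
  assumes hd: "\<And>y. (h has_derivative Dh y) (at y)" and "a \<le> b"
    and bound: "\<And>t. a \<le> t \<Longrightarrow> t \<le> b \<Longrightarrow> \<bar>Dh (t *\<^sub>R x) x\<bar> \<le> M"
  shows "\<bar>h (b *\<^sub>R x) - h (a *\<^sub>R x)\<bar> \<le> (b - a) * M"
proof (cases "a = b")
  case False
  then obtain z where z: "a < z" "z < b" "h (b *\<^sub>R x) - h (a *\<^sub>R x) = (b - a) * Dh (z *\<^sub>R x) x"
    using MVT2[of a b "\<lambda>t. h (t *\<^sub>R x)" "\<lambda>t. Dh (t *\<^sub>R x) x"] assms(2)
      has_real_derivative_along_ray[OF hd] by force
  then show ?thesis
    using bound[of z] assms(2) by (simp add: abs_mult mult_left_mono)
qed (simp add: bound)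

text \<open>Differentiate \<open>\<integral> h ((1 + s) x) dx = (1 + s)\<^sup>-\<^sup>n \<integral> h\<close> at \<open>s = 0\<close>; dominated
  convergence moves the derivative inside the integral.\<close>
lemma integral_radial_derivative:
  fixes h :: "'a::euclidean_space \<Rightarrow> real"
  assumes h: "integrable lborel h"
    and hd: "\<And>x. (h has_derivative Dh x) (at x)"
    and Dm: "(\<lambda>x. Dh x x) \<in> borel_measurable borel"
    and G: "integrable lborel G"
    and dom: "\<And>x s. 0 < s \<Longrightarrow> s \<le> 1/2 \<Longrightarrow> \<bar>h ((1 + s) *\<^sub>R x) - h x\<bar> \<le> s * G x"
  shows "integral\<^sup>L lborel (\<lambda>x. Dh x x) = - real DIM('a) * integral\<^sup>L lborel h"
proof -
  define s where "s k = inverse (real (Suc (Suc k)))" for k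
  have s: "0 < s k" "s k \<le> 1/2" for k
    by (auto simp: s_def field_simps)
  have "filterlim s (at 0) sequentially"
    unfolding s_def using s(1)
    by (intro filterlim_atI LIMSEQ_Suc[OF LIMSEQ_inverse_real_of_nat]) (auto simp: s_def)
  then have quotient: "(\<lambda>k. (f (t + s k) - f t) / s k) \<longlonglongrightarrow> D"
    if "(f has_real_derivative D) (at t)" for f D t
    using filterlim_compose that unfolding DERIV_def by blast
  define Q where "Q k x = (h ((1 + s k) *\<^sub>R x) - h x) / s k" for k x
  have [measurable]: "h \<in> borel_measurable borel"
    using h by (simp add: borel_measurable_integrable)
  have lim_Dh: "(\<lambda>k. integral\<^sup>L lborel (Q k)) \<longlonglongrightarrow> integral\<^sup>L lborel (\<lambda>x. Dh x x)"
  proof (rule integral_dominated_convergence[OF _ _ G])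
    show "(\<lambda>x. Dh x x) \<in> borel_measurable lborel" using Dm by simp
    show "Q k \<in> borel_measurable lborel" for k
      unfolding Q_def by measurable
    have "(\<lambda>k. Q k x) \<longlonglongrightarrow> Dh x x" for x
      using quotient[OF has_real_derivative_along_ray[of h "Dh x" 1 x]] hd by (simp add: Q_def)
    then show "AE x in lborel. (\<lambda>k. Q k x) \<longlonglongrightarrow> Dh x x"
      by simp
    show "AE x in lborel. norm (Q k x) \<le> G x" for k
      using dom[OF s, of k] s(1)[of k]
      by (simp add: Q_def abs_divide pos_divide_le_eq mult.commute)
  qed
  have integral_Q: "integral\<^sup>L lborel (Q k) = integral\<^sup>L lborel h * ((1 / (1 + s k) ^ DIM('a) - 1) / s k)" for k
    unfolding Q_def[abs_def] using s(1)[of k] by (intro integral_dilation_quotient h) auto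
  have "((\<lambda>t. 1 / (1 + t) ^ DIM('a)) has_real_derivative - real DIM('a)) (at 0)"
    by (auto intro!: derivative_eq_intros)
  from quotient[OF this] have "(\<lambda>k. (1 / (1 + s k) ^ DIM('a) - 1) / s k) \<longlonglongrightarrow> - real DIM('a)"
    by simp
  then have "(\<lambda>k. integral\<^sup>L lborel (Q k)) \<longlonglongrightarrow> integral\<^sup>L lborel h * - real DIM('a)"
    unfolding integral_Q by (rule tendsto_mult_left)
  from LIMSEQ_unique[OF lim_Dh this] show ?thesis
    by simp
qed

lemma derivative_bounded_on_compact:
  fixes h :: "'a::euclidean_space \<Rightarrow> real"
  assumes hd: "\<And>x. (h has_derivative Dh x) (at x)"
    and Dc: "\<And>e. e \<in> Basis \<Longrightarrow> continuous_on UNIV (\<lambda>x. Dh x e)"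
    and K: "compact K"
  obtains B where "B \<ge> 0" "\<And>y v. y \<in> K \<Longrightarrow> \<bar>Dh y v\<bar> \<le> B * norm v"
proof -
  define F where "F y = (\<Sum>e\<in>Basis. \<bar>Dh y e\<bar>)" for y
  have "continuous_on K F"
    unfolding F_def by (intro continuous_intros continuous_on_subset[OF Dc]) auto
  then obtain B0 where "\<And>y. y \<in> K \<Longrightarrow> F y \<le> B0"
    using K compact_continuous_image
    by (metis bounded_real compact_imp_bounded image_eqI abs_le_D1)
  define B where "B = max B0 0"
  then have B: "\<And>y. y \<in> K \<Longrightarrow> F y \<le> B"
    using \<open>\<And>y. y \<in> K \<Longrightarrow> F y \<le> B0\<close> by force
  have "\<bar>Dh y v\<bar> \<le> B * norm v" if "y \<in> K" for y v
  proof -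
    have "\<bar>Dh y v\<bar> \<le> (\<Sum>e\<in>Basis. \<bar>(v \<bullet> e) * Dh y e\<bar>)"
      unfolding linear_eq_sum_Basis[OF has_derivative_linear[OF hd], of y v] by (rule sum_abs)
    also have "\<dots> \<le> (\<Sum>e\<in>Basis. norm v * \<bar>Dh y e\<bar>)"
      by (intro sum_mono) (simp add: abs_mult Basis_le_norm mult_right_mono)
    also have "\<dots> = norm v * F y"
      by (simp add: F_def sum_distrib_left)
    also have "\<dots> \<le> norm v * B"
      using B[OF that] by (simp add: mult_left_mono)
    finally show ?thesis
      by (simp add: mult.commute)
  qed
  moreover have "B \<ge> 0"
    by (simp add: B_def)
  ultimately show ?thesis
    using that by blast
qed

lemma abs_diff_dilation_le:
  fixes h :: "'a::real_normed_vector \<Rightarrow> real"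
  assumes hd: "\<And>x. (h has_derivative Dh x) (at x)"
    and B: "B \<ge> 0" "\<And>y v. norm y \<le> 2 * R \<Longrightarrow> \<bar>Dh y v\<bar> \<le> B * norm v"
    and supp: "\<And>x. R < norm x \<Longrightarrow> h x = 0"
    and s: "0 < s" "s \<le> 1"
  shows "\<bar>h ((1 + s) *\<^sub>R x) - h x\<bar> \<le> s * (B * R * indicator (cball 0 R) x)"
proof (cases "norm x \<le> R")
  case True
  have "\<bar>h ((1 + s) *\<^sub>R x) - h (1 *\<^sub>R x)\<bar> \<le> ((1 + s) - 1) * (B * R)"
  proof (rule abs_diff_along_ray_le[OF hd])
    fix t assume t: "1 \<le> t" "t \<le> 1 + s"
    have "norm (t *\<^sub>R x) \<le> 2 * R"
      using t s True by (simp add: mult_mono)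
    then have "\<bar>Dh (t *\<^sub>R x) x\<bar> \<le> B * norm x"
      using B(2)[of "t *\<^sub>R x" x] by simp
    also have "\<dots> \<le> B * R"
      using True B(1) by (rule mult_left_mono)
    finally show "\<bar>Dh (t *\<^sub>R x) x\<bar> \<le> B * R" .
  qed (use s in simp)
  then show ?thesis
    using True by simp
next
  case False
  have "norm x \<le> (1 + s) * norm x"
    using s by (simp add: algebra_simps)
  then have "R < norm ((1 + s) *\<^sub>R x)"
    using False s by simp
  then show ?thesis
    using False supp[of x] supp[of "(1 + s) *\<^sub>R x"] s by simp
qed

lemma integral_radial_derivative_bounded_support:
  fixes h :: "'a::euclidean_space \<Rightarrow> real"
  assumes hd: "\<And>x. (h has_derivative Dh x) (at x)"
    and Dc: "\<And>e. e \<in> Basis \<Longrightarrow> continuous_on UNIV (\<lambda>x. Dh x e)"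
    and supp: "\<And>x. R < norm x \<Longrightarrow> h x = 0"
  shows "integral\<^sup>L lborel (\<lambda>x. Dh x x) = - real DIM('a) * integral\<^sup>L lborel h"
proof -
  obtain B where B: "B \<ge> 0" "\<And>y v. y \<in> cball 0 (2 * R) \<Longrightarrow> \<bar>Dh y v\<bar> \<le> B * norm v"
    using derivative_bounded_on_compact[OF hd Dc compact_cball] by blast
  have "continuous_on UNIV h"
    using hd by (meson continuous_at_imp_continuous_on has_derivative_continuous)
  then show ?thesis
  proof (rule integral_radial_derivative[OF integrable_continuous_bounded_support[OF _ supp] hd])
    show "(\<lambda>x. Dh x x) \<in> borel_measurable borel"
      using continuous_on_radial_derivative[OF hd Dc] by (rule borel_measurable_continuous_onI)
    show "integrable lborel (\<lambda>x::'a. B * R * indicator (cball 0 R) x)"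
      using emeasure_lborel_cball_finite[of "0::'a" R]
      by (intro integrable_mult_right) (simp add: integrable_indicator_iff)
    show "\<bar>h ((1 + s) *\<^sub>R x) - h x\<bar> \<le> s * (B * R * indicator (cball 0 R) x)"
      if "0 < s" "s \<le> 1/2" for x :: 'a and s :: real
      using B supp that by (intro abs_diff_dilation_le[OF hd]) auto
  qed
qed

section \<open>The weighted gradient identity\<close>

lemma has_derivative_exp_norm_power2:
  "((\<lambda>x. exp (a * norm x ^ 2)) has_derivative (\<lambda>v. ((2 * a * exp (a * norm x ^ 2)) *\<^sub>R x) \<bullet> v)) (at x)"
proof -
  have "((\<lambda>x. a * norm x ^ 2) has_derivative (\<lambda>v. a * (2 * (x \<bullet> v)))) (at x)"
    by (rule has_derivative_mult_right[OF has_derivative_norm_power2])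
  from DERIV_compose_FDERIV[OF DERIV_exp this] show ?thesis
    by (simp add: mult_ac)
qed

lemma grad_eq_sum_Basis:
  assumes "(u has_derivative D) (at x)"
  shows "grad u x = (\<Sum>e\<in>Basis. D e *\<^sub>R e)"
  using frechet_derivative_at[OF assms] by (simp add: grad_def)

lemma inner_grad_eq:
  assumes "(u has_derivative D) (at x)"
  shows "grad u x \<bullet> v = D v"
proof -
  have "grad u x \<bullet> v = (\<Sum>e\<in>Basis. D e * (e \<bullet> v))"
    by (simp add: grad_eq_sum_Basis[OF assms] inner_sum_left)
  also have "\<dots> = D v"
    using linear_eq_sum_Basis[OF has_derivative_linear[OF assms], of v]
    by (simp add: inner_commute mult.commute)
  finally show ?thesis .
qed

lemma grad_eq_if_has_derivative_inner:
  assumes "(u has_derivative (\<lambda>v. a \<bullet> v)) (at x)"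
  shows "grad u x = a"
  using grad_eq_sum_Basis[OF assms] by (simp add: euclidean_representation)

lemma continuous_on_grad:
  assumes ud: "\<And>x. (u has_derivative D x) (at x)"
    and Dc: "\<And>e. e \<in> Basis \<Longrightarrow> continuous_on UNIV (\<lambda>x. D x e)"
  shows "continuous_on UNIV (grad u)"
proof -
  have "continuous_on UNIV (\<lambda>x. \<Sum>e\<in>Basis. D x e *\<^sub>R e)"
    by (intro continuous_intros Dc) auto
  then show ?thesis
    using grad_eq_sum_Basis[OF ud] by (simp add: fun_eq_iff)
qed

lemma grad_eq_0_outside_support:
  fixes u :: "'a::euclidean_space \<Rightarrow> real"
  assumes supp: "\<And>x. r < norm x \<Longrightarrow> u x = 0" and x: "r < norm x"
  shows "grad u x = 0"
proof -
  have "\<forall>\<^sub>F y in at x. 0 = u y"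
    using x supp unfolding eventually_at_topological
    by (intro exI[of _ "{y. r < norm y}"]) (auto intro: open_Collect_less continuous_intros)
  then have "(u has_derivative (\<lambda>v. 0)) (at x)"
    by (rule has_derivative_transform_eventually[OF has_derivative_const]) (auto simp: supp[OF x])
  then show ?thesis
    using grad_eq_if_has_derivative_inner[of u 0 x] by simp
qed

lemma L2sq_grad_eq:
  fixes u :: "'a::euclidean_space \<Rightarrow> real"
  assumes ud: "\<And>x. (u has_derivative D x) (at x)"
    and Dc: "\<And>e. e \<in> Basis \<Longrightarrow> continuous_on UNIV (\<lambda>x. D x e)"
    and supp: "\<And>x. r < norm x \<Longrightarrow> u x = 0"
  shows "L2sq c (grad u) = 2 * c * real DIM('a) * L2sq c u
           + integral\<^sup>L lborel (\<lambda>x. exp (c * norm x ^ 2) * norm (grad u x + (2 * c * u x) *\<^sub>R x) ^ 2)"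
proof -
  define w where "w x = exp (c * norm x ^ 2)" for x :: 'a
  define Dh where "Dh x v = u x * u x * (((2 * c * w x) *\<^sub>R x) \<bullet> v) + (u x * D x v + D x v * u x) * w x"
    for x v
  have uc: "continuous_on UNIV u"
    using ud by (meson continuous_at_imp_continuous_on has_derivative_continuous)
  have wc: "continuous_on UNIV w"
    unfolding w_def by (intro continuous_intros)
  have hd: "((\<lambda>x. u x * u x * w x) has_derivative Dh x) (at x)" for x
    unfolding Dh_def w_def by (intro has_derivative_mult ud has_derivative_exp_norm_power2)
  have Dhc: "continuous_on UNIV (\<lambda>x. Dh x e)" if "e \<in> Basis" for e
    unfolding Dh_def by (intro continuous_intros uc wc Dc that)
  have "integral\<^sup>L lborel (\<lambda>x. Dh x x) = - real DIM('a) * integral\<^sup>L lborel (\<lambda>x. u x * u x * w x)"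
    using supp by (intro integral_radial_derivative_bounded_support[OF hd Dhc]) auto
  also have "integral\<^sup>L lborel (\<lambda>x. u x * u x * w x) = L2sq c u"
    by (simp add: L2sq_eq_integral_lborel[OF uc] w_def power2_eq_square mult.commute)
  finally have radial: "integral\<^sup>L lborel (\<lambda>x. Dh x x) = - real DIM('a) * L2sq c u" .
  have square: "w x * norm (grad u x + (2 * c * u x) *\<^sub>R x) ^ 2 = w x * norm (grad u x) ^ 2 + 2 * c * Dh x x" for x
    using inner_grad_eq[OF ud, of x x]
    by (simp add: Dh_def power2_norm_eq_inner inner_add_left inner_add_right inner_commute algebra_simps)
  have "integrable lborel (\<lambda>x. w x * norm (grad u x) ^ 2)"
    using grad_eq_0_outside_support[of r u, OF supp]
    by (intro integrable_continuous_bounded_support[of _ r] continuous_intros wc continuous_on_grad[OF ud Dc])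
      auto
  moreover have "integrable lborel (\<lambda>x. Dh x x)"
    using supp by (intro integrable_continuous_bounded_support[of _ r] continuous_on_radial_derivative[OF hd Dhc])
      (auto simp: Dh_def)
  ultimately have "integral\<^sup>L lborel (\<lambda>x. w x * norm (grad u x + (2 * c * u x) *\<^sub>R x) ^ 2)
      = integral\<^sup>L lborel (\<lambda>x. w x * norm (grad u x) ^ 2) + 2 * c * integral\<^sup>L lborel (\<lambda>x. Dh x x)"
    by (simp add: square)
  also have "integral\<^sup>L lborel (\<lambda>x. w x * norm (grad u x) ^ 2) = L2sq c (grad u)"
    by (simp add: L2sq_eq_integral_lborel[OF continuous_on_grad[OF ud Dc]] w_def)
  finally show ?thesis
    using radial by (simp add: w_def)
qed

lemma L2sq_grad_ge:
  fixes u :: "'a::euclidean_space \<Rightarrow> real"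
  assumes ud: "\<And>x. (u has_derivative D x) (at x)"
    and Dc: "\<And>e. e \<in> Basis \<Longrightarrow> continuous_on UNIV (\<lambda>x. D x e)"
    and supp: "\<And>x. r < norm x \<Longrightarrow> u x = 0"
  shows "L2sq c (grad u) \<ge> 2 * c * real DIM('a) * L2sq c u"
proof -
  have "integral\<^sup>L lborel (\<lambda>x. exp (c * norm x ^ 2) * norm (grad u x + (2 * c * u x) *\<^sub>R x) ^ 2) \<ge> 0"
    by (rule Bochner_Integration.integral_nonneg) simp
  moreover have "L2sq c (grad u) = 2 * c * real DIM('a) * L2sq c u
           + integral\<^sup>L lborel (\<lambda>x. exp (c * norm x ^ 2) * norm (grad u x + (2 * c * u x) *\<^sub>R x) ^ 2)"
    by (rule L2sq_grad_eq[of u D r]) (use ud Dc supp in auto)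
  ultimately show ?thesis
    by linarith
qed

section \<open>The Gaussian and its smooth cut-offs\<close>

lemma has_derivative_gaussian:
  "((\<lambda>x. exp (- c * norm x ^ 2)) has_derivative (\<lambda>v. ((- 2 * c * exp (- c * norm x ^ 2)) *\<^sub>R x) \<bullet> v)) (at x)"
  using has_derivative_exp_norm_power2[of "- c" x] by simp

lemma abs_diff_dilation_gaussian_le:
  fixes c s :: real and x :: "'a::real_inner"
  assumes c: "c > 0" and s: "0 < s" "s \<le> 1/2"
  shows "\<bar>exp (- c * norm ((1 + s) *\<^sub>R x) ^ 2) - exp (- c * norm x ^ 2)\<bar>
    \<le> s * (3 * c * (norm x ^ 2 * exp (- c * norm x ^ 2)))"
proof -
  define g where "g x = exp (- c * norm x ^ 2)" for x :: 'a
  define Dg where "Dg x v = ((- 2 * c * g x) *\<^sub>R x) \<bullet> v" for x v :: 'a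
  have gd: "(g has_derivative Dg x) (at x)" for x
    unfolding g_def[abs_def] Dg_def using has_derivative_gaussian .
  have "\<bar>g ((1 + s) *\<^sub>R x) - g (1 *\<^sub>R x)\<bar> \<le> ((1 + s) - 1) * (3 * c * (norm x ^ 2 * g x))"
  proof (rule abs_diff_along_ray_le[OF gd])
    fix t assume t: "1 \<le> t" "t \<le> 1 + s"
    have "1 * norm x \<le> t * norm x"
      using t by (intro mult_right_mono) auto
    then have "norm x ^ 2 \<le> norm (t *\<^sub>R x) ^ 2"
      using t by (intro power_mono) auto
    then have "g (t *\<^sub>R x) \<le> g x"
      using c by (simp add: g_def)
    have "\<bar>Dg (t *\<^sub>R x) x\<bar> = 2 * c * t * (norm x ^ 2 * g (t *\<^sub>R x))"
      using t c by (simp add: Dg_def g_def abs_mult power2_norm_eq_inner)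
    also have "\<dots> \<le> 2 * c * (3 / 2) * (norm x ^ 2 * g x)"
      using t s c \<open>g (t *\<^sub>R x) \<le> g x\<close> by (intro mult_mono mult_left_mono) (auto simp: g_def)
    finally show "\<bar>Dg (t *\<^sub>R x) x\<bar> \<le> 3 * c * (norm x ^ 2 * g x)"
      by simp
  qed (use s in simp)
  then show ?thesis
    by (simp add: g_def)
qed

lemma integral_norm_power2_times_gaussian:
  fixes c :: real
  assumes c: "c > 0"
  shows "integral\<^sup>L lborel (\<lambda>x::'a::euclidean_space. norm x ^ 2 * exp (- c * norm x ^ 2))
       = real DIM('a) / (2 * c) * integral\<^sup>L lborel (\<lambda>x::'a. exp (- c * norm x ^ 2))"
proof -
  define g where "g x = exp (- c * norm x ^ 2)" for x :: 'a
  define Dg where "Dg x v = ((- 2 * c * g x) *\<^sub>R x) \<bullet> v" for x v :: 'a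
  have gd: "(g has_derivative Dg x) (at x)" for x
    unfolding g_def[abs_def] Dg_def using has_derivative_gaussian .
  have "integral\<^sup>L lborel (\<lambda>x. Dg x x) = - real DIM('a) * integral\<^sup>L lborel g"
  proof (rule integral_radial_derivative[OF _ gd])
    show "integrable lborel g"
      unfolding g_def using integrable_gaussian[OF c] by simp
    show "(\<lambda>x. Dg x x) \<in> borel_measurable borel"
      unfolding Dg_def g_def by measurable
    show "integrable lborel (\<lambda>x. 3 * c * (norm x ^ 2 * g x))"
      unfolding g_def by (intro integrable_mult_right integrable_norm_power2_times_gaussian c)
    show "\<bar>g ((1 + s) *\<^sub>R x) - g x\<bar> \<le> s * (3 * c * (norm x ^ 2 * g x))" if "0 < s" "s \<le> 1/2" for x s
      unfolding g_def using c that by (rule abs_diff_dilation_gaussian_le)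
  qed
  moreover have "Dg x x = -2 * c * (norm x ^ 2 * g x)" for x
    by (simp add: Dg_def power2_norm_eq_inner)
  ultimately show ?thesis
    using c by (simp add: g_def[abs_def] field_simps)
qed

lemma grad_gaussian:
  "grad (\<lambda>x. exp (- c * norm x ^ 2)) x = (- 2 * c * exp (- c * norm x ^ 2)) *\<^sub>R x"
  using has_derivative_gaussian by (rule grad_eq_if_has_derivative_inner)

lemma L2sq_gaussian:
  "L2sq c (\<lambda>x::'a::euclidean_space. exp (- c * norm x ^ 2)) = integral\<^sup>L lborel (\<lambda>x::'a. exp (- c * norm x ^ 2))"
proof -
  have cont: "continuous_on UNIV (\<lambda>x::'a. exp (- c * norm x ^ 2))"
    by (intro continuous_intros)
  show ?thesis
    unfolding L2sq_eq_integral_lborel[OF cont]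
  proof (intro Bochner_Integration.integral_cong refl)
    fix x :: 'a
    show "exp (c * norm x ^ 2) * norm (exp (- c * norm x ^ 2)) ^ 2 = exp (- c * norm x ^ 2)"
      by (simp add: power2_eq_square flip: exp_add)
  qed
qed

text \<open>The Gaussian is not compactly supported, so the weighted gradient identity is not
  available; both sides are computed from its second moment instead.\<close>
lemma L2sq_grad_gaussian:
  fixes c :: real
  assumes c: "c > 0"
  shows "L2sq c (grad (\<lambda>x::'a::euclidean_space. exp (- c * norm x ^ 2)))
       = 2 * c * real DIM('a) * L2sq c (\<lambda>x::'a. exp (- c * norm x ^ 2))"
proof -
  have cont: "continuous_on UNIV (grad (\<lambda>x::'a. exp (- c * norm x ^ 2)))"
    unfolding grad_gaussian[abs_def] by (intro continuous_intros)
  have "L2sq c (grad (\<lambda>x::'a. exp (- c * norm x ^ 2)))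
      = integral\<^sup>L lborel (\<lambda>x::'a. 4 * c ^ 2 * (norm x ^ 2 * exp (- c * norm x ^ 2)))"
    unfolding L2sq_eq_integral_lborel[OF cont]
  proof (intro Bochner_Integration.integral_cong refl)
    fix x :: 'a
    show "exp (c * norm x ^ 2) * norm (grad (\<lambda>x. exp (- c * norm x ^ 2)) x) ^ 2
        = 4 * c ^ 2 * (norm x ^ 2 * exp (- c * norm x ^ 2))"
      unfolding grad_gaussian
      by (simp add: abs_mult power_mult_distrib power2_eq_square mult_ac flip: exp_add)
  qed
  also have "\<dots> = 4 * c ^ 2 * integral\<^sup>L lborel (\<lambda>x::'a. norm x ^ 2 * exp (- c * norm x ^ 2))"
    by (rule integral_mult_right_zero)
  also have "\<dots> = 2 * c * real DIM('a) * L2sq c (\<lambda>x::'a. exp (- c * norm x ^ 2))"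
    unfolding integral_norm_power2_times_gaussian[OF c] L2sq_gaussian
    using c by (simp add: power2_eq_square)
  finally show ?thesis .
qed

lemma L2sq_gaussian_pos:
  fixes c :: real
  assumes "c > 0"
  shows "L2sq c (\<lambda>x::'a::euclidean_space. exp (- c * norm x ^ 2)) > 0"
  unfolding L2sq_gaussian
proof (rule integral_lborel_pos[where a=0])
  show "continuous_on UNIV (\<lambda>x::'a. exp (- c * norm x ^ 2))"
    by (intro continuous_intros)
  show "integrable lborel (\<lambda>x::'a. exp (- c * norm x ^ 2))"
    by (rule integrable_gaussian[OF assms])
qed simp_all

definition gauss_bump :: "real \<Rightarrow> real \<Rightarrow> 'a::euclidean_space \<Rightarrow> real" where
  "gauss_bump c a x = exp (- c * norm x ^ 2) * bump_deriv 0 (2 - a * norm x ^ 2)"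

lemma bump_deriv_eq_0_outside_ball:
  assumes a: "a > 0" and x: "sqrt (2 / a) < norm x"
  shows "bump_deriv j (2 - a * norm x ^ 2) = 0"
proof -
  have "sqrt (2 / a) ^ 2 < norm x ^ 2"
    using a x by (intro power_strict_mono) auto
  then have "2 / a < norm x ^ 2"
    using a by simp
  then show ?thesis
    using a by (simp add: bump_deriv_def field_simps)
qed

lemma gauss_bump_eq_0_outside_ball:
  "a > 0 \<Longrightarrow> sqrt (2 / a) < norm x \<Longrightarrow> gauss_bump c a x = 0"
  by (simp add: gauss_bump_def bump_deriv_eq_0_outside_ball)

lemma C0_inf_gauss_bump:
  assumes a: "a > 0"
  shows "C0_inf (gauss_bump c a :: 'a::euclidean_space \<Rightarrow> real)"
  unfolding C0_inf_def C_inf_def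
proof (intro conjI allI)
  fix k
  have "Ck k (\<lambda>x::'a. exp (- c * norm x ^ 2))"
    using Ck_compose[OF deriv_tower_affine[OF deriv_tower_exp, of "- c" 0] Ck_norm_power2] by simp
  moreover have "Ck k (\<lambda>x::'a. bump_deriv 0 (2 - a * norm x ^ 2))"
    using Ck_compose[OF deriv_tower_affine[OF deriv_tower_bump_deriv, of "- a" 2] Ck_norm_power2] by simp
  ultimately show "Ck k (gauss_bump c a :: 'a \<Rightarrow> real)"
    unfolding gauss_bump_def[abs_def] by (rule Ck_mult)
next
  have "{x::'a. gauss_bump c a x \<noteq> 0} \<subseteq> cball 0 (sqrt (2 / a))"
    using gauss_bump_eq_0_outside_ball[OF a] by (force simp: not_le)
  then have "closure {x::'a. gauss_bump c a x \<noteq> 0} \<subseteq> cball 0 (sqrt (2 / a))"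
    by (rule closure_minimal) simp
  then show "compact (closure {x::'a. gauss_bump c a x \<noteq> 0})"
    by (meson bounded_cball bounded_subset closed_closure compact_eq_bounded_closed)
qed

lemma gauss_bump_nonzero: "(gauss_bump c a :: 'a::euclidean_space \<Rightarrow> real) \<noteq> (\<lambda>x. 0)"
proof
  assume "(gauss_bump c a :: 'a \<Rightarrow> real) = (\<lambda>x. 0)"
  then have "gauss_bump c a (0::'a) = 0" by simp
  then show False
    using bump_deriv_0_pos[of 2] by (simp add: gauss_bump_def)
qed

lemma has_derivative_gauss_bump:
  "(gauss_bump c a has_derivative (\<lambda>v. ((- 2 * c * gauss_bump c a x
      - 2 * a * exp (- c * norm x ^ 2) * bump_deriv 1 (2 - a * norm x ^ 2)) *\<^sub>R x) \<bullet> v)) (at x)"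
proof -
  have "(bump_deriv 0 has_real_derivative bump_deriv 1 t) (at t)" for t
    using deriv_tower_bump_deriv by (simp add: deriv_tower_def)
  moreover have "((\<lambda>x. 2 - a * norm x ^ 2) has_derivative (\<lambda>v. 0 - a * (2 * (x \<bullet> v)))) (at x)"
    by (intro has_derivative_diff has_derivative_const has_derivative_mult_right has_derivative_norm_power2)
  ultimately have "((\<lambda>x. bump_deriv 0 (2 - a * norm x ^ 2)) has_derivative
      (\<lambda>v. (0 - a * (2 * (x \<bullet> v))) * bump_deriv 1 (2 - a * norm x ^ 2))) (at x)"
    by (rule DERIV_compose_FDERIV)
  from has_derivative_mult[OF has_derivative_gaussian this] show ?thesis
    unfolding gauss_bump_def[abs_def]
    by (rule has_derivative_eq_rhs) (simp add: fun_eq_iff algebra_simps)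
qed

lemma grad_gauss_bump:
  "grad (gauss_bump c a) x = (- 2 * c * gauss_bump c a x
      - 2 * a * exp (- c * norm x ^ 2) * bump_deriv 1 (2 - a * norm x ^ 2)) *\<^sub>R x"
  using has_derivative_gauss_bump by (rule grad_eq_if_has_derivative_inner)

lemma continuous_on_gauss_bump: "continuous_on UNIV (gauss_bump c a)"
  using has_derivative_gauss_bump
  by (meson continuous_at_imp_continuous_on has_derivative_continuous)

lemma defect_gauss_bump_le:
  assumes a: "a > 0"
  shows "exp (c * norm x ^ 2) * norm (grad (gauss_bump c a) x + (2 * c * gauss_bump c a x) *\<^sub>R x) ^ 2
    \<le> 128 * a * exp (- c * norm x ^ 2)"
proof -
  define e where "e = exp (- c * norm x ^ 2)"
  define P where "P = bump_deriv 1 (2 - a * norm x ^ 2)"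
  have "grad (gauss_bump c a) x + (2 * c * gauss_bump c a x) *\<^sub>R x = (- 2 * a * e * P) *\<^sub>R x"
    by (simp add: grad_gauss_bump e_def P_def algebra_simps)
  moreover have "exp (c * norm x ^ 2) * e ^ 2 = e"
    by (simp add: e_def power2_eq_square flip: exp_add)
  ultimately have defect: "exp (c * norm x ^ 2) * norm (grad (gauss_bump c a) x + (2 * c * gauss_bump c a x) *\<^sub>R x) ^ 2
      = e * (4 * a ^ 2 * (P ^ 2 * norm x ^ 2))"
    by (simp add: power_mult_distrib mult_ac)
  have "P ^ 2 * norm x ^ 2 \<le> 16 * (2 / a)"
  proof (cases "P = 0")
    case False
    then have "norm x ^ 2 \<le> 2 / a"
      using a by (auto simp: P_def bump_deriv_def field_simps split: if_splits)
    moreover have "P ^ 2 \<le> 4 ^ 2"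
      using power_mono[OF abs_bump_deriv_1_le[of "2 - a * norm x ^ 2"], of 2] by (simp add: P_def)
    ultimately show ?thesis
      by (intro mult_mono) auto
  qed (use a in simp)
  then have "e * (4 * a ^ 2 * (P ^ 2 * norm x ^ 2)) \<le> e * (4 * a ^ 2 * (16 * (2 / a)))"
    by (intro mult_left_mono) (auto simp: e_def)
  also have "\<dots> = 128 * a * e"
    using a by (simp add: power2_eq_square)
  finally show ?thesis
    by (simp add: defect e_def)
qed

lemma L2sq_gauss_bump_pos:
  assumes "a > 0"
  shows "L2sq c (gauss_bump c a :: 'a::euclidean_space \<Rightarrow> real) > 0"
  using continuous_on_gauss_bump gauss_bump_eq_0_outside_ball[OF assms] gauss_bump_nonzero
  by (rule L2sq_pos)

lemma L2sq_gauss_bump_ge: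
  assumes a: "0 < a" "a \<le> 1"
  shows "L2sq c (gauss_bump c 1 :: 'a::euclidean_space \<Rightarrow> real) \<le> L2sq c (gauss_bump c a :: 'a \<Rightarrow> real)"
  unfolding L2sq_eq_integral_lborel[OF continuous_on_gauss_bump]
proof (rule integral_mono')
  show "integrable lborel (\<lambda>x::'a. exp (c * norm x ^ 2) * norm (gauss_bump c a x) ^ 2)"
    using gauss_bump_eq_0_outside_ball[OF a(1)]
    by (intro integrable_continuous_bounded_support[of _ "sqrt (2 / a)"] continuous_intros
        continuous_on_gauss_bump) auto
  fix x :: 'a
  have "a * norm x ^ 2 \<le> 1 * norm x ^ 2"
    using a by (intro mult_right_mono) auto
  then have "\<bar>gauss_bump c 1 x\<bar> \<le> \<bar>gauss_bump c a x\<bar>"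
    by (simp add: gauss_bump_def abs_mult bump_deriv_0_nonneg bump_deriv_0_mono)
  then show "exp (c * norm x ^ 2) * norm (gauss_bump c 1 x) ^ 2 \<le> exp (c * norm x ^ 2) * norm (gauss_bump c a x) ^ 2"
    by (simp add: abs_le_square_iff)
qed simp

section \<open>The infimum of the Rayleigh quotient\<close>

definition rayleigh_quotient :: "real \<Rightarrow> ('a::euclidean_space \<Rightarrow> real) \<Rightarrow> real" where
  "rayleigh_quotient c u = L2sq c (grad u) / L2sq c u"

lemma L2sq_grad_gauss_bump_le:
  fixes c a :: real
  assumes c: "c > 0" and a: "a > 0"
  shows "L2sq c (grad (gauss_bump c a :: 'a::euclidean_space \<Rightarrow> real))
    \<le> 2 * c * real DIM('a) * L2sq c (gauss_bump c a :: 'a \<Rightarrow> real)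
      + 128 * a * integral\<^sup>L lborel (\<lambda>x::'a. exp (- c * norm x ^ 2))"
proof -
  define u where "u = (gauss_bump c a :: 'a \<Rightarrow> real)"
  define D where "D x v = ((- 2 * c * u x
      - 2 * a * exp (- c * norm x ^ 2) * bump_deriv 1 (2 - a * norm x ^ 2)) *\<^sub>R x) \<bullet> v" for x v :: 'a
  have ud: "(u has_derivative D x) (at x)" for x
    unfolding u_def D_def by (rule has_derivative_gauss_bump)
  have "continuous_on UNIV (\<lambda>x::'a. bump_deriv 1 (2 - a * norm x ^ 2))"
    by (intro continuous_on_compose2[OF deriv_tower_continuous_on[OF deriv_tower_bump_deriv]]
        continuous_intros) auto
  then have Dc: "continuous_on UNIV (\<lambda>x. D x v)" for v
    unfolding D_def u_def by (intro continuous_intros continuous_on_gauss_bump)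
  have "L2sq c (grad u) = 2 * c * real DIM('a) * L2sq c u
      + integral\<^sup>L lborel (\<lambda>x. exp (c * norm x ^ 2) * norm (grad u x + (2 * c * u x) *\<^sub>R x) ^ 2)"
    by (rule L2sq_grad_eq[of u D "sqrt (2 / a)"])
      (use ud Dc gauss_bump_eq_0_outside_ball[OF a] in \<open>auto simp: u_def\<close>)
  also have "integral\<^sup>L lborel (\<lambda>x. exp (c * norm x ^ 2) * norm (grad u x + (2 * c * u x) *\<^sub>R x) ^ 2)
      \<le> integral\<^sup>L lborel (\<lambda>x::'a. 128 * a * exp (- c * norm x ^ 2))"
    unfolding u_def using defect_gauss_bump_le[OF a] c a
    by (intro integral_mono' integrable_mult_right integrable_gaussian) auto
  finally show ?thesis
    by (simp add: u_def)
qed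

lemma rayleigh_quotient_gauss_bump_le:
  fixes c a :: real
  assumes c: "c > 0" and a: "0 < a" "a \<le> 1"
  shows "rayleigh_quotient c (gauss_bump c a :: 'a::euclidean_space \<Rightarrow> real)
    \<le> 2 * c * real DIM('a) + a * (128 * integral\<^sup>L lborel (\<lambda>x::'a. exp (- c * norm x ^ 2))
        / L2sq c (gauss_bump c 1 :: 'a \<Rightarrow> real))"
proof -
  define A where "A = integral\<^sup>L lborel (\<lambda>x::'a. exp (- c * norm x ^ 2))"
  define L where "L b = L2sq c (gauss_bump c b :: 'a \<Rightarrow> real)" for b
  have L: "0 < L 1" "L 1 \<le> L a"
    using L2sq_gauss_bump_pos[of 1] L2sq_gauss_bump_ge[OF a] by (simp_all add: L_def)
  have "A \<ge> 0"
    unfolding A_def by (rule Bochner_Integration.integral_nonneg) simp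
  have "rayleigh_quotient c (gauss_bump c a :: 'a \<Rightarrow> real) \<le> 2 * c * real DIM('a) + 128 * a * A / L a"
    using L2sq_grad_gauss_bump_le[OF c a(1), where 'a='a] L
    by (simp add: rayleigh_quotient_def A_def L_def field_simps)
  also have "128 * a * A / L a \<le> 128 * a * A / L 1"
    using L a \<open>A \<ge> 0\<close> by (intro divide_left_mono) auto
  finally show ?thesis
    by (simp add: A_def L_def mult_ac)
qed

lemma C0_infE:
  fixes u :: "'a::euclidean_space \<Rightarrow> real"
  assumes "C0_inf u"
  obtains D r where "\<And>x. (u has_derivative D x) (at x)"
    and "\<And>e. continuous_on UNIV (\<lambda>x. D x e)" and "\<And>x. r < norm x \<Longrightarrow> u x = 0"
proof -
  have C1: "Ck (Suc 0) u"
    using assms by (simp add: C0_inf_def C_inf_def)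
  obtain r where "\<And>x. x \<in> closure {x. u x \<noteq> 0} \<Longrightarrow> norm x \<le> r"
    using assms unfolding C0_inf_def by (meson bounded_iff compact_imp_bounded)
  then have "r < norm x \<Longrightarrow> u x = 0" for x
    using closure_subset[of "{x. u x \<noteq> 0}"] by fastforce
  then show ?thesis
    using that[of "\<lambda>x. frechet_derivative u (at x)" r] Ck_SucD[OF C1] by simp
qed

lemma rayleigh_quotient_ge:
  fixes u :: "'a::euclidean_space \<Rightarrow> real"
  assumes "C0_inf u" and "u \<noteq> (\<lambda>x. 0)"
  shows "2 * c * real DIM('a) \<le> rayleigh_quotient c u"
proof -
  obtain D r where ud: "\<And>x. (u has_derivative D x) (at x)"
    and Dc: "\<And>e. continuous_on UNIV (\<lambda>x. D x e)" and supp: "\<And>x. r < norm x \<Longrightarrow> u x = 0"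
    using C0_infE[OF assms(1)] by blast
  have "0 < L2sq c u"
    using ud supp assms(2)
    by (intro L2sq_pos[of u r]) (meson continuous_at_imp_continuous_on has_derivative_continuous)+
  moreover have "2 * c * real DIM('a) * L2sq c u \<le> L2sq c (grad u)"
    by (rule L2sq_grad_ge[of u D r]) (use ud Dc supp in auto)
  ultimately show ?thesis
    by (simp add: rayleigh_quotient_def pos_le_divide_eq)
qed

lemma ex_rayleigh_quotient_less:
  fixes c \<epsilon> :: real
  assumes c: "c > 0" and \<epsilon>: "\<epsilon> > 0"
  shows "\<exists>u :: 'a::euclidean_space \<Rightarrow> real. C0_inf u \<and> u \<noteq> (\<lambda>x. 0)
    \<and> rayleigh_quotient c u < 2 * c * real DIM('a) + \<epsilon>"
proof -
  define K where "K = 128 * integral\<^sup>L lborel (\<lambda>x::'a. exp (- c * norm x ^ 2))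
    / L2sq c (gauss_bump c 1 :: 'a \<Rightarrow> real)"
  have "K \<ge> 0"
    unfolding K_def using L2sq_gauss_bump_pos[of 1]
    by (intro divide_nonneg_pos mult_nonneg_nonneg Bochner_Integration.integral_nonneg) auto
  define a where "a = min 1 (\<epsilon> / (K + 1))"
  have a: "0 < a" "a \<le> 1"
    using \<epsilon> \<open>K \<ge> 0\<close> by (auto simp: a_def)
  have "a * K \<le> \<epsilon> / (K + 1) * K"
    using \<open>K \<ge> 0\<close> by (intro mult_right_mono) (auto simp: a_def)
  also have "\<dots> < \<epsilon>"
    using \<epsilon> \<open>K \<ge> 0\<close> by (simp add: field_simps)
  finally have "a * K < \<epsilon>" .
  moreover have "rayleigh_quotient c (gauss_bump c a :: 'a \<Rightarrow> real) \<le> 2 * c * real DIM('a) + a * K"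
    unfolding K_def by (rule rayleigh_quotient_gauss_bump_le[OF c a])
  ultimately have "rayleigh_quotient c (gauss_bump c a :: 'a \<Rightarrow> real) < 2 * c * real DIM('a) + \<epsilon>"
    by linarith
  then show ?thesis
    using C0_inf_gauss_bump[OF a(1)] gauss_bump_nonzero by blast
qed

lemma Inf_rayleigh_quotient:
  fixes c :: real
  assumes c: "c > 0"
  shows "Inf (rayleigh_quotient c ` {u :: 'a::euclidean_space \<Rightarrow> real. C0_inf u \<and> u \<noteq> (\<lambda>x. 0)})
    = 2 * c * real DIM('a)"
proof (rule cInf_eq_non_empty)
  show "rayleigh_quotient c ` {u :: 'a \<Rightarrow> real. C0_inf u \<and> u \<noteq> (\<lambda>x. 0)} \<noteq> {}"
    using C0_inf_gauss_bump[of 1 c] gauss_bump_nonzero[of c 1] by auto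
  show "2 * c * real DIM('a) \<le> q" if "q \<in> rayleigh_quotient c ` {u :: 'a \<Rightarrow> real. C0_inf u \<and> u \<noteq> (\<lambda>x. 0)}" for q
    using that rayleigh_quotient_ge by auto
  show "q \<le> 2 * c * real DIM('a)"
    if "\<And>p. p \<in> rayleigh_quotient c ` {u :: 'a \<Rightarrow> real. C0_inf u \<and> u \<noteq> (\<lambda>x. 0)} \<Longrightarrow> q \<le> p" for q
  proof (rule ccontr)
    assume "\<not> q \<le> 2 * c * real DIM('a)"
    then obtain u :: "'a \<Rightarrow> real" where "C0_inf u" "u \<noteq> (\<lambda>x. 0)" "rayleigh_quotient c u < q"
      using ex_rayleigh_quotient_less[OF c, of "q - 2 * c * real DIM('a)", where 'a='a] by auto
    then show False
      using that[of "rayleigh_quotient c u"] by auto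
  qed
qed

lemma rayleigh_quotient_gaussian:
  fixes c :: real
  assumes "c > 0"
  shows "rayleigh_quotient c (\<lambda>x::'a::euclidean_space. exp (- c * norm x ^ 2)) = 2 * c * real DIM('a)"
  using L2sq_grad_gaussian[OF assms, where 'a='a] L2sq_gaussian_pos[OF assms, where 'a='a]
  by (simp add: rayleigh_quotient_def)

theorem corollary5:
  fixes c :: real
  assumes "CARD('n::finite) \<ge> 2" and "c > 0"
  shows "Inf {L2sq c (grad u) / L2sq c u | u :: real^'n \<Rightarrow> real. C0_inf u \<and> u \<noteq> (\<lambda>x. 0)}
           = 2 * c * real CARD('n)
       \<and> 2 * c * real CARD('n)
           = L2sq c (grad (\<lambda>x::real^'n. exp (- c * norm x ^ 2)))
             / L2sq c (\<lambda>x::real^'n. exp (- c * norm x ^ 2))"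
proof
  have "{L2sq c (grad u) / L2sq c u | u :: real^'n \<Rightarrow> real. C0_inf u \<and> u \<noteq> (\<lambda>x. 0)}
      = rayleigh_quotient c ` {u :: real^'n \<Rightarrow> real. C0_inf u \<and> u \<noteq> (\<lambda>x. 0)}"
    by (auto simp: rayleigh_quotient_def)
  then show "Inf {L2sq c (grad u) / L2sq c u | u :: real^'n \<Rightarrow> real. C0_inf u \<and> u \<noteq> (\<lambda>x. 0)}
      = 2 * c * real CARD('n)"
    using Inf_rayleigh_quotient[OF \<open>c > 0\<close>, where 'a="real^'n"] by simp
  show "2 * c * real CARD('n) = L2sq c (grad (\<lambda>x::real^'n. exp (- c * norm x ^ 2)))
      / L2sq c (\<lambda>x::real^'n. exp (- c * norm x ^ 2))"
    using rayleigh_quotient_gaussian[OF \<open>c > 0\<close>, where 'a="real^'n"] by (simp add: rayleigh_quotient_def)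
qed

end
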